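(* Let $F$ be a field of characteristic zero, $\mathrm{Gr}_n$ the Grassmann algebra of $V=\mathrm{Span}\{e_1,\dots,e_n\}$, and $A_0(n)$ the subalgebra of $\mathrm{Gr}_n$ generated by $V$. Let $R$ be a Rota–Baxter operator of weight zero on $\mathrm{Gr}_n$. Then (a) $R(\mathrm{Gr}_n)\subseteq A_0(n)$; (b) $R(e_1\wedge e_2\wedge\dots\wedge e_n)=0$; (c) $(R(1))^{[(n+1)/2]+1}=0$; (d) $\mathrm{rb}(\mathrm{Gr}_n)\le 2[\tfrac{n+1}{2}]+2$.
   Context: A linear operator $R$ on $A$ is a Rota–Baxter operator of weight $0$ if $R(x)R(y)=R(R(x)y+xR(y))$ for all $x,y\in A$. $[\cdot]$ denotes the integer part. The RB-index $\mathrm{rb}(A)$ is the least $n\in\mathbb N$ such that $R^n=0$ for every Rota–Baxter operator $R$ of weight zero on $A$. *)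

theory Defs
  imports Main
begin

text \<open>Grassmann algebra Gr_n over a field F: elements are coefficient functions
  on subsets S of {1..n}; the basis element e_S (S = {i1 < ... < ik}) stands
  for e_i1 \<and> ... \<and> e_ik, and e_{} = 1.\<close>

definition gr :: "nat \<Rightarrow> (nat set \<Rightarrow> 'a::field) set" where
  "gr n = {x. \<forall>S. \<not> S \<subseteq> {1..n} \<longrightarrow> x S = 0}"

text \<open>Sign of e_S e_T for disjoint S, T: (-1)^(number of pairs s \<in> S, t \<in> T with t < s).\<close>
definition gr_sign :: "nat set \<Rightarrow> nat set \<Rightarrow> 'a::field" where
  "gr_sign S T = (-1) ^ card {(s, t). s \<in> S \<and> t \<in> T \<and> t < s}"

definition gr_mult :: "nat \<Rightarrow> (nat set \<Rightarrow> 'a::field) \<Rightarrow> (nat set \<Rightarrow> 'a) \<Rightarrow> (nat set \<Rightarrow> 'a)" where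
  "gr_mult n x y = (\<lambda>U. if U \<subseteq> {1..n}
      then (\<Sum>S\<in>Pow U. gr_sign S (U - S) * x S * y (U - S)) else 0)"

definition gr_add :: "(nat set \<Rightarrow> 'a::field) \<Rightarrow> (nat set \<Rightarrow> 'a) \<Rightarrow> (nat set \<Rightarrow> 'a)" where
  "gr_add x y = (\<lambda>S. x S + y S)"

definition gr_smult :: "'a::field \<Rightarrow> (nat set \<Rightarrow> 'a) \<Rightarrow> (nat set \<Rightarrow> 'a)" where
  "gr_smult c x = (\<lambda>S. c * x S)"

definition gr_zero :: "nat set \<Rightarrow> 'a::field" where
  "gr_zero = (\<lambda>S. 0)"

definition gr_basis :: "nat set \<Rightarrow> (nat set \<Rightarrow> 'a::field)" where
  "gr_basis T = (\<lambda>S. if S = T then 1 else 0)"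

definition gr_one :: "nat set \<Rightarrow> 'a::field" where
  "gr_one = gr_basis {}"

fun gr_pow :: "nat \<Rightarrow> (nat set \<Rightarrow> 'a::field) \<Rightarrow> nat \<Rightarrow> (nat set \<Rightarrow> 'a)" where
  "gr_pow n x 0 = gr_one"
| "gr_pow n x (Suc k) = gr_mult n (gr_pow n x k) x"

inductive_set A0 :: "nat \<Rightarrow> (nat set \<Rightarrow> 'a::field) set" for n where
  gen: "i \<in> {1..n} \<Longrightarrow> gr_basis {i} \<in> A0 n"
| zero: "gr_zero \<in> A0 n"
| add: "x \<in> A0 n \<Longrightarrow> y \<in> A0 n \<Longrightarrow> gr_add x y \<in> A0 n"
| smult: "x \<in> A0 n \<Longrightarrow> gr_smult c x \<in> A0 n"
| mult: "x \<in> A0 n \<Longrightarrow> y \<in> A0 n \<Longrightarrow> gr_mult n x y \<in> A0 n"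

definition gr_linear :: "nat \<Rightarrow> ((nat set \<Rightarrow> 'a::field) \<Rightarrow> (nat set \<Rightarrow> 'a)) \<Rightarrow> bool" where
  "gr_linear n R \<longleftrightarrow> (\<forall>x\<in>gr n. R x \<in> gr n)
     \<and> (\<forall>x\<in>gr n. \<forall>y\<in>gr n. R (gr_add x y) = gr_add (R x) (R y))
     \<and> (\<forall>c. \<forall>x\<in>gr n. R (gr_smult c x) = gr_smult c (R x))"

definition rota_baxter0 :: "nat \<Rightarrow> ((nat set \<Rightarrow> 'a::field) \<Rightarrow> (nat set \<Rightarrow> 'a)) \<Rightarrow> bool" where
  "rota_baxter0 n R \<longleftrightarrow> gr_linear n R \<and>
     (\<forall>x\<in>gr n. \<forall>y\<in>gr n. gr_mult n (R x) (R y) = R (gr_add (gr_mult n (R x) y) (gr_mult n x (R y))))"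

definition rb_index :: "'a::field itself \<Rightarrow> nat \<Rightarrow> nat" where
  "rb_index (_ :: 'a itself) n = (LEAST m. \<forall>R :: (nat set \<Rightarrow> 'a) \<Rightarrow> (nat set \<Rightarrow> 'a).
      rota_baxter0 n R \<longrightarrow> (\<forall>x\<in>gr n. (R ^^ m) x = gr_zero))"

end

theory Submission
  imports Defs
begin

text \<open>Filter \<open>Gr\<^sub>n\<close> by the powers \<open>(Gr\<^sub>n\<^sup>+)\<^sup>k\<close> of its augmentation ideal. A descending
  induction along this filtration, applying the Rota--Baxter identity to \<open>R(x) x + x R(x)\<close>,
  shows that \<open>R\<close> has no constant terms, which is (a). For \<open>c = R(e\<^sub>1 \<dots> e\<^sub>n)\<close> the identity
  gives \<open>R(c e\<^sub>T) = c R(e\<^sub>T)\<close>, and comparing coefficients pushes \<open>c\<close> up the filtration, which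
  is (b). The odd part of \<open>R(1)\<close> squares to zero and its even part is central and lies in
  \<open>(Gr\<^sub>n\<^sup>+)\<^sup>2\<close>, which gives (c). Finally, for left multiplication \<open>L\<close> by \<open>R(1)\<close> the identity
  with \<open>x = 1\<close> reads \<open>LR - RL = R\<^sup>2\<close>, so \<open>j! R\<^sup>j\<^sup>+\<^sup>1\<close> is a combination of the \<open>L\<^sup>p R L\<^sup>q\<close> with
  \<open>p + q = j\<close>; these vanish for \<open>j = 2m - 1\<close> since \<open>L\<^sup>m = 0\<close> by (c), which gives (d).\<close>

definition inversions :: "nat set \<Rightarrow> nat set \<Rightarrow> (nat \<times> nat) set" where
  "inversions S T = {(s, t). s \<in> S \<and> t \<in> T \<and> t < s}"

lemma finite_inversions: "finite S \<Longrightarrow> finite T \<Longrightarrow> finite (inversions S T)"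
  by (rule finite_subset[of _ "S \<times> T"]) (auto simp: inversions_def)

lemma gr_sign_inversions: "gr_sign S T = (-1) ^ card (inversions S T)"
  unfolding gr_sign_def inversions_def by simp

lemma gr_sign_empty_left [simp]: "gr_sign {} T = 1"
  and gr_sign_empty_right [simp]: "gr_sign S {} = 1"
  unfolding gr_sign_def by simp_all

lemma gr_sign_nonzero: "gr_sign S T \<noteq> 0"
  by (simp add: gr_sign_def)

lemma inversions_Un_left: "A \<inter> B = {} \<Longrightarrow> inversions (A \<union> B) C = inversions A C \<union> inversions B C"
  and inversions_Un_right: "inversions A (B \<union> C) = inversions A B \<union> inversions A C"
  by (auto simp: inversions_def)

lemma gr_sign_assoc:
  assumes "finite A" "finite B" "finite C" "A \<inter> B = {}" "A \<inter> C = {}" "B \<inter> C = {}"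
  shows "gr_sign (A \<union> B) C * gr_sign A B = (gr_sign A (B \<union> C) * gr_sign B C :: 'a::field)"
proof -
  have left: "card (inversions (A \<union> B) C) = card (inversions A C) + card (inversions B C)"
    unfolding inversions_Un_left[OF assms(4)]
    by (intro card_Un_disjoint finite_inversions assms) (use assms in \<open>auto simp: inversions_def\<close>)
  have right: "card (inversions A (B \<union> C)) = card (inversions A B) + card (inversions A C)"
    unfolding inversions_Un_right
    by (intro card_Un_disjoint finite_inversions assms) (use assms in \<open>auto simp: inversions_def\<close>)
  show ?thesis
    unfolding gr_sign_inversions left right power_add by (simp add: algebra_simps)
qed

lemma gr_sign_swap:
  assumes "finite S" "finite T" "S \<inter> T = {}"
  shows "gr_sign S T = ((-1) ^ (card S * card T) * gr_sign T S :: 'a::field)"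
proof -
  let ?I = "{(s, t). s \<in> S \<and> t \<in> T \<and> s < t}"
  have flip: "card (inversions T S) = card ?I"
    by (rule bij_betw_same_card[of "\<lambda>(t, s). (s, t)"])
      (auto simp: bij_betw_def inj_on_def inversions_def image_def)
  have split: "S \<times> T = inversions S T \<union> ?I"
    using assms by (auto simp: inversions_def)
  have "card (S \<times> T) = card (inversions S T) + card ?I"
    unfolding split
    by (rule card_Un_disjoint)
      (use assms in \<open>auto simp: finite_inversions inversions_def intro: finite_subset[of _ "S \<times> T"]\<close>)
  hence card_ST: "card S * card T = card (inversions S T) + card (inversions T S)"
    using flip by (simp add: card_cartesian_product)
  have "(-1::'a) ^ (card S * card T) * gr_sign T S
      = (-1) ^ card (inversions S T) * ((-1) ^ card (inversions T S) * (-1) ^ card (inversions T S))"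
    unfolding gr_sign_inversions card_ST power_add by (simp add: algebra_simps)
  also have "\<dots> = (-1) ^ card (inversions S T)"
    by (simp flip: power_add add: mult_2[symmetric] power_even_eq[symmetric])
  finally show ?thesis by (simp add: gr_sign_inversions)
qed

lemma sum_eq_single:
  "finite A \<Longrightarrow> a \<in> A \<Longrightarrow> (\<And>x. x \<in> A \<Longrightarrow> x \<noteq> a \<Longrightarrow> f x = 0) \<Longrightarrow> sum f A = f a"
  by (subst sum.remove[of A a]) (auto intro: sum.neutral)

lemma finite_subset_atLeastAtMost: "U \<subseteq> {1..n::nat} \<Longrightarrow> finite U"
  by (meson finite_atLeastAtMost finite_subset)

lemma gr_mult_in_gr [simp]: "gr_mult n x y \<in> gr n"
  by (auto simp: gr_def gr_mult_def)

lemma gr_mult_outside: "\<not> U \<subseteq> {1..n} \<Longrightarrow> gr_mult n x y U = 0"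
  by (simp add: gr_mult_def)

lemma gr_outside: "x \<in> gr n \<Longrightarrow> \<not> U \<subseteq> {1..n} \<Longrightarrow> x U = 0"
  by (simp add: gr_def)

lemma gr_add_in_gr [simp]: "x \<in> gr n \<Longrightarrow> y \<in> gr n \<Longrightarrow> gr_add x y \<in> gr n"
  and gr_smult_in_gr [simp]: "x \<in> gr n \<Longrightarrow> gr_smult c x \<in> gr n"
  and gr_zero_in_gr [simp]: "gr_zero \<in> gr n"
  and gr_one_in_gr [simp]: "gr_one \<in> gr n"
  by (auto simp: gr_def gr_add_def gr_smult_def gr_zero_def gr_one_def gr_basis_def)

lemma gr_smult_eq_zero_iff: "gr_smult c x = gr_zero \<longleftrightarrow> c = 0 \<or> x = gr_zero"
  by (auto simp: gr_smult_def gr_zero_def fun_eq_iff)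

lemma gr_basis_in_gr: "T \<subseteq> {1..n} \<Longrightarrow> gr_basis T \<in> gr n"
  by (auto simp: gr_def gr_basis_def)

lemma gr_pow_in_gr [simp]: "gr_pow n x k \<in> gr n"
  by (cases k) auto

lemma gr_mult_add_left: "gr_mult n (gr_add x y) z = gr_add (gr_mult n x z) (gr_mult n y z)"
  and gr_mult_add_right: "gr_mult n z (gr_add x y) = gr_add (gr_mult n z x) (gr_mult n z y)"
  and gr_mult_smult_left: "gr_mult n (gr_smult c x) z = gr_smult c (gr_mult n x z)"
  and gr_mult_smult_right: "gr_mult n z (gr_smult c x) = gr_smult c (gr_mult n z x)"
  and gr_mult_zero_left: "gr_mult n gr_zero z = gr_zero"
  and gr_mult_zero_right: "gr_mult n z gr_zero = gr_zero"
  by (auto simp: fun_eq_iff gr_mult_def gr_add_def gr_smult_def gr_zero_def algebra_simps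
      sum.distrib sum_distrib_left)

lemma gr_mult_one_left: assumes "x \<in> gr n" shows "gr_mult n gr_one x = x"
proof
  fix U
  show "gr_mult n gr_one x U = x U"
  proof (cases "U \<subseteq> {1..n}")
    case True
    then show ?thesis
      by (simp add: gr_mult_def gr_one_def gr_basis_def, subst sum_eq_single[where a = "{}"])
        (auto simp: finite_subset_atLeastAtMost)
  qed (use assms in \<open>simp add: gr_mult_outside gr_outside\<close>)
qed

lemma gr_mult_basis_right:
  "gr_mult n x (gr_basis T) U =
     (if U \<subseteq> {1..n} \<and> T \<subseteq> U then gr_sign (U - T) T * x (U - T) else 0)"
proof (cases "U \<subseteq> {1..n} \<and> T \<subseteq> U")
  case True
  then have "U - (U - T) = T" by auto
  with True show ?thesis
    by (simp add: gr_mult_def gr_basis_def, subst sum_eq_single[where a = "U - T"])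
      (auto simp: finite_subset_atLeastAtMost)
qed (auto simp: gr_mult_def gr_basis_def intro!: sum.neutral)

lemma gr_mult_mult_expand:
  assumes U: "U \<subseteq> {1..n}"
  shows "gr_mult n (gr_mult n x y) z U =
    (\<Sum>S\<in>Pow U. \<Sum>W\<in>Pow (U - S).
       gr_sign S (U - S) * gr_sign W (U - S - W) * (x S * y W * z (U - S - W)))"
    (is "_ = (\<Sum>S\<in>Pow U. \<Sum>W\<in>Pow (U - S). ?G S W)")
proof -
  define F where "F S V = gr_sign V (U - V) * gr_sign S (V - S) * x S * y (V - S) * z (U - V)"
    for S V
  have "gr_mult n (gr_mult n x y) z U = (\<Sum>V\<in>Pow U. gr_sign V (U - V) * gr_mult n x y V * z (U - V))"
    using U by (simp add: gr_mult_def)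
  also have "\<dots> = (\<Sum>V\<in>Pow U. \<Sum>S\<in>{S\<in>Pow U. S \<subseteq> V}. F S V)"
  proof (rule sum.cong[OF refl])
    fix V assume "V \<in> Pow U"
    with U have "V \<subseteq> {1..n}" "Pow V = {S\<in>Pow U. S \<subseteq> V}" by auto
    then show "gr_sign V (U - V) * gr_mult n x y V * z (U - V)
        = (\<Sum>S\<in>{S\<in>Pow U. S \<subseteq> V}. F S V)"
      by (simp add: gr_mult_def F_def sum_distrib_left sum_distrib_right algebra_simps)
  qed
  also have "\<dots> = (\<Sum>S\<in>Pow U. \<Sum>V\<in>{V\<in>Pow U. S \<subseteq> V}. F S V)"
    by (rule sum.swap_restrict) (use U in \<open>auto simp: finite_subset_atLeastAtMost\<close>)
  also have "\<dots> = (\<Sum>S\<in>Pow U. \<Sum>W\<in>Pow (U - S). ?G S W)"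
  proof (rule sum.cong[OF refl])
    fix S assume S: "S \<in> Pow U"
    show "(\<Sum>V\<in>{V\<in>Pow U. S \<subseteq> V}. F S V) = (\<Sum>W\<in>Pow (U - S). ?G S W)"
    proof (rule sym, rule sum.reindex_bij_witness[of _ "\<lambda>V. V - S" "\<lambda>W. S \<union> W"])
      fix W assume W: "W \<in> Pow (U - S)"
      have finite: "finite S" "finite W" "finite (U - S - W)"
        using S W U by (auto intro: finite_subset_atLeastAtMost finite_subset)
      have "gr_sign (S \<union> W) (U - S - W) * gr_sign S W
          = (gr_sign S (W \<union> (U - S - W)) * gr_sign W (U - S - W) :: 'a)"
        by (rule gr_sign_assoc) (use finite W in auto)
      moreover have "S \<union> W - S = W" "U - (S \<union> W) = U - S - W" "W \<union> (U - S - W) = U - S"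
        using W by auto
      ultimately show "F S (S \<union> W) = ?G S W"
        unfolding F_def by (simp add: algebra_simps)
    qed (use S in auto)
  qed
  finally show ?thesis .
qed

lemma gr_mult_assoc: "gr_mult n (gr_mult n x y) z = gr_mult n x (gr_mult n y z)"
proof
  fix U
  show "gr_mult n (gr_mult n x y) z U = gr_mult n x (gr_mult n y z) U"
  proof (cases "U \<subseteq> {1..n}")
    case True
    then have "gr_mult n x (gr_mult n y z) U
        = (\<Sum>S\<in>Pow U. gr_sign S (U - S) * x S * gr_mult n y z (U - S))"
      by (simp add: gr_mult_def)
    also have "\<dots> = (\<Sum>S\<in>Pow U. \<Sum>W\<in>Pow (U - S).
       gr_sign S (U - S) * gr_sign W (U - S - W) * (x S * y W * z (U - S - W)))"
      using True by (auto simp: gr_mult_def sum_distrib_left algebra_simps intro!: sum.cong)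
    finally show ?thesis using gr_mult_mult_expand[OF True] by simp
  qed (simp add: gr_mult_outside)
qed

section \<open>The degree filtration\<close>

text \<open>\<open>gr_filt k x\<close>: \<open>x\<close> lies in the ideal spanned by the \<open>e\<^sub>S\<close> with \<open>|S| \<ge> k\<close>,
  i.e. in \<open>(Gr\<^sub>n\<^sup>+)\<^sup>k\<close>.\<close>

definition gr_filt :: "nat \<Rightarrow> (nat set \<Rightarrow> 'a::field) \<Rightarrow> bool" where
  "gr_filt k x \<longleftrightarrow> (\<forall>S. card S < k \<longrightarrow> x S = 0)"

lemma gr_filt_0 [simp]: "gr_filt 0 x"
  by (simp add: gr_filt_def)

lemma gr_filt_mono: "gr_filt k x \<Longrightarrow> j \<le> k \<Longrightarrow> gr_filt j x"
  by (auto simp: gr_filt_def)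

lemma gr_filt_mult:
  assumes "gr_filt j x" "gr_filt k y"
  shows "gr_filt (j + k) (gr_mult n x y)"
  unfolding gr_filt_def
proof (intro allI impI)
  fix U :: "nat set" assume card_U: "card U < j + k"
  show "gr_mult n x y U = 0"
  proof (cases "U \<subseteq> {1..n}")
    case True
    have "x S * y (U - S) = 0" if "S \<subseteq> U" for S
    proof -
      have "card S + card (U - S) = card U"
        using that True finite_subset_atLeastAtMost
        by (metis card_Diff_subset card_mono le_add_diff_inverse finite_subset)
      then have "card S < j \<or> card (U - S) < k" using card_U by linarith
      then show ?thesis using assms unfolding gr_filt_def by auto
    qed
    then show ?thesis using True by (auto simp: gr_mult_def intro!: sum.neutral)
  qed (simp add: gr_mult_outside)
qed

lemma gr_filt_pow: "gr_filt j x \<Longrightarrow> gr_filt (j * k) (gr_pow n x k)"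
proof (induction k)
  case (Suc k)
  then show ?case using gr_filt_mult[OF Suc.IH Suc.prems, of n] by (simp add: add.commute)
qed simp

lemma gr_filt_top_eq_zero:
  assumes "x \<in> gr n" "gr_filt (Suc n) x"
  shows "x = gr_zero"
proof
  fix U
  show "x U = gr_zero U"
  proof (cases "U \<subseteq> {1..n}")
    case True
    then have "card U \<le> n"
      by (metis card_atLeastAtMost card_mono diff_Suc_1 finite_atLeastAtMost)
    then show ?thesis using assms(2) by (simp add: gr_filt_def gr_zero_def)
  qed (use assms in \<open>simp add: gr_outside gr_zero_def\<close>)
qed

lemma gr_mult_filt_right_low:
  assumes "x \<in> gr n" "gr_filt k x" "card U \<le> k"
  shows "gr_mult n y x U = y {} * x U"
proof (cases "U \<subseteq> {1..n}")
  case True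
  then have "gr_mult n y x U = (\<Sum>S\<in>Pow U. gr_sign S (U - S) * y S * x (U - S))"
    by (simp add: gr_mult_def)
  also have "\<dots> = gr_sign {} (U - {}) * y {} * x (U - {})"
  proof (rule sum_eq_single)
    fix S assume "S \<in> Pow U" "S \<noteq> {}"
    then have "card (U - S) < card U"
      using True finite_subset_atLeastAtMost
      by (metis Diff_subset Pow_iff card_seteq linorder_not_le Diff_eq_empty_iff double_diff
          subset_refl)
    then show "gr_sign S (U - S) * y S * x (U - S) = 0"
      using assms(2,3) by (simp add: gr_filt_def)
  qed (use True in \<open>auto simp: finite_subset_atLeastAtMost\<close>)
  finally show ?thesis by simp
qed (use assms(1) in \<open>simp add: gr_mult_outside gr_outside\<close>)

lemma gr_mult_filt_left_low:
  assumes "x \<in> gr n" "gr_filt k x" "card U \<le> k"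
  shows "gr_mult n x y U = x U * y {}"
proof (cases "U \<subseteq> {1..n}")
  case True
  then have "gr_mult n x y U = (\<Sum>S\<in>Pow U. gr_sign S (U - S) * x S * y (U - S))"
    by (simp add: gr_mult_def)
  also have "\<dots> = gr_sign U (U - U) * x U * y (U - U)"
  proof (rule sum_eq_single)
    fix S assume "S \<in> Pow U" "S \<noteq> U"
    then have "card S < card U"
      using True finite_subset_atLeastAtMost by (meson PowD psubsetI psubset_card_mono)
    then show "gr_sign S (U - S) * x S * y (U - S) = 0"
      using assms(2,3) by (simp add: gr_filt_def)
  qed (use True in \<open>auto simp: finite_subset_atLeastAtMost\<close>)
  finally show ?thesis by simp
qed (use assms(1) in \<open>simp add: gr_mult_outside gr_outside\<close>)

lemma gr_mult_filt_basis_compl: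
  assumes "gr_filt k c" "S \<subseteq> {1..n}" "card S = k"
  shows "gr_mult n c (gr_basis ({1..n} - S))
    = gr_smult (gr_sign S ({1..n} - S) * c S) (gr_basis {1..n})"
proof
  fix U
  show "gr_mult n c (gr_basis ({1..n} - S)) U
      = gr_smult (gr_sign S ({1..n} - S) * c S) (gr_basis {1..n}) U"
  proof (cases "U = {1..n}")
    case True
    from assms(2) have "{1..n} - ({1..n} - S) = S" by auto
    then show ?thesis
      unfolding True gr_mult_basis_right by (simp add: gr_smult_def gr_basis_def)
  next
    case False
    have "c (U - ({1..n} - S)) = 0" if "U \<subseteq> {1..n}" "{1..n} - S \<subseteq> U"
    proof -
      have "U - ({1..n} - S) \<subset> S" using that False assms(2) by auto
      then have "card (U - ({1..n} - S)) < k"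
        using assms(2,3) finite_subset_atLeastAtMost psubset_card_mono by blast
      then show ?thesis using assms(1) by (simp add: gr_filt_def)
    qed
    then have "gr_mult n c (gr_basis ({1..n} - S)) U = 0"
      unfolding gr_mult_basis_right by simp
    with False show ?thesis by (simp add: gr_smult_def gr_basis_def)
  qed
qed

section \<open>Even and odd elements\<close>

lemma gr_mult_reflect:
  assumes "U \<subseteq> {1..n}"
  shows "gr_mult n y x U = (\<Sum>T\<in>Pow U. gr_sign (U - T) T * y (U - T) * x T)"
proof -
  have "gr_mult n y x U = (\<Sum>S\<in>Pow U. gr_sign S (U - S) * y S * x (U - S))"
    using assms by (simp add: gr_mult_def)
  also have "\<dots> = (\<Sum>T\<in>Pow U. gr_sign (U - T) T * y (U - T) * x T)"
    by (rule sum.reindex_bij_witness[of _ "\<lambda>T. U - T" "\<lambda>T. U - T"]) (auto simp: double_diff)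
  finally show ?thesis .
qed

lemma gr_mult_term_swap:
  assumes "U \<subseteq> {1..n}" "T \<subseteq> U"
  shows "gr_sign T (U - T) * x T * y (U - T)
    = ((-1) ^ (card T * card (U - T)) * (gr_sign (U - T) T * y (U - T) * x T) :: 'a::field)"
proof -
  have "gr_sign T (U - T) = ((-1) ^ (card T * card (U - T)) * gr_sign (U - T) T :: 'a)"
    by (rule gr_sign_swap) (use assms in \<open>auto intro: finite_subset finite_subset_atLeastAtMost\<close>)
  then show ?thesis by (simp add: algebra_simps)
qed

lemma gr_mult_even_commute:
  assumes "\<And>T. odd (card T) \<Longrightarrow> x T = 0"
  shows "gr_mult n x y = gr_mult n y x"
proof
  fix U
  show "gr_mult n x y U = gr_mult n y x U"
  proof (cases "U \<subseteq> {1..n}")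
    case True
    then have "gr_mult n x y U = (\<Sum>T\<in>Pow U. gr_sign T (U - T) * x T * y (U - T))"
      by (simp add: gr_mult_def)
    also have "\<dots> = (\<Sum>T\<in>Pow U. gr_sign (U - T) T * y (U - T) * x T)"
    proof (rule sum.cong[OF refl])
      fix T assume "T \<in> Pow U"
      then show "gr_sign T (U - T) * x T * y (U - T) = gr_sign (U - T) T * y (U - T) * x T"
        using assms gr_mult_term_swap[OF True, of T x y] by (cases "odd (card T)") auto
    qed
    also have "\<dots> = gr_mult n y x U"
      by (simp add: gr_mult_reflect[OF True])
    finally show ?thesis .
  qed (simp add: gr_mult_outside)
qed

lemma gr_mult_odd_self:
  fixes x :: "nat set \<Rightarrow> 'a::field_char_0"
  assumes "\<And>T. even (card T) \<Longrightarrow> x T = 0"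
  shows "gr_mult n x x = gr_zero"
proof
  fix U
  show "gr_mult n x x U = gr_zero U"
  proof (cases "U \<subseteq> {1..n}")
    case True
    then have "gr_mult n x x U = (\<Sum>T\<in>Pow U. gr_sign T (U - T) * x T * x (U - T))"
      by (simp add: gr_mult_def)
    also have "\<dots> = (\<Sum>T\<in>Pow U. - (gr_sign (U - T) T * x (U - T) * x T))"
    proof (rule sum.cong[OF refl])
      fix T assume "T \<in> Pow U"
      then show "gr_sign T (U - T) * x T * x (U - T) = - (gr_sign (U - T) T * x (U - T) * x T)"
        using assms gr_mult_term_swap[OF True, of T x x]
        by (cases "even (card T) \<or> even (card (U - T))") auto
    qed
    also have "\<dots> = - gr_mult n x x U"
      by (simp add: gr_mult_reflect[OF True] sum_negf)
    finally show ?thesis by (simp add: gr_zero_def)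
  qed (simp add: gr_mult_outside gr_zero_def)
qed

lemma gr_pow_add_square_zero:
  assumes "u \<in> gr n" "v \<in> gr n" "gr_mult n u u = gr_zero"
    and central: "\<And>y. gr_mult n v y = gr_mult n y v"
  shows "gr_pow n (gr_add u v) (Suc k) =
     gr_add (gr_pow n v (Suc k)) (gr_smult (of_nat (Suc k)) (gr_mult n (gr_pow n v k) u))"
proof (induction k)
  case 0
  have "gr_mult n gr_one (gr_add u v) = gr_add u v"
    "gr_mult n gr_one u = u" "gr_mult n gr_one v = v"
    using assms(1,2) by (simp_all add: gr_mult_one_left)
  then show ?case by simp (simp add: gr_add_def gr_smult_def add.commute)
next
  case (Suc k)
  define V where "V = gr_pow n v (Suc k)"
  define W where "W = gr_mult n (gr_pow n v k) u"
  have Wu: "gr_mult n W u = gr_zero"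
    unfolding W_def gr_mult_assoc assms(3) gr_mult_zero_right ..
  have Wv: "gr_mult n W v = gr_mult n V u"
    unfolding W_def V_def gr_mult_assoc by (simp add: central[of u] gr_mult_assoc)
  have "gr_pow n (gr_add u v) (Suc (Suc k))
      = gr_mult n (gr_add V (gr_smult (of_nat (Suc k)) W)) (gr_add u v)"
    using Suc.IH by (simp add: V_def W_def)
  also have "\<dots> = gr_add (gr_add (gr_mult n V u) (gr_mult n V v))
      (gr_smult (of_nat (Suc k)) (gr_add (gr_mult n W u) (gr_mult n W v)))"
    unfolding gr_mult_add_left gr_mult_add_right gr_mult_smult_left
    by (simp add: fun_eq_iff gr_add_def gr_smult_def algebra_simps)
  also have "\<dots> = gr_add (gr_pow n v (Suc (Suc k)))
      (gr_smult (of_nat (Suc (Suc k))) (gr_mult n (gr_pow n v (Suc k)) u))"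
    unfolding Wu Wv by (auto simp: fun_eq_iff gr_add_def gr_smult_def gr_zero_def V_def algebra_simps)
  finally show ?case .
qed

lemma gr_basis_in_A0:
  assumes "S \<subseteq> {1..n}" "S \<noteq> {}"
  shows "(gr_basis S :: nat set \<Rightarrow> 'a::field) \<in> A0 n"
  using assms
proof (induction "card S" arbitrary: S)
  case 0
  then show ?case using finite_subset_atLeastAtMost by auto
next
  case (Suc k)
  have finite: "finite S" using Suc.prems(1) by (rule finite_subset_atLeastAtMost)
  define i where "i = Max S"
  have "i \<in> S" using finite Suc.prems(2) by (simp add: i_def)
  then have i: "i \<in> S" "i \<in> {1..n}" using Suc.prems(1) by auto
  show ?case
  proof (cases "S - {i} = {}")
    case True
    then have "S = {i}" using i by auto
    then show ?thesis using i by (auto intro: A0.gen)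
  next
    case False
    have "card (S - {i}) = k" using Suc.hyps(2) finite i by simp
    then have IH: "(gr_basis (S - {i}) :: nat set \<Rightarrow> 'a) \<in> A0 n"
      using Suc.hyps(1) Suc.prems(1) False by auto
    have "inversions (S - {i}) {i} = {}"
      using finite by (auto simp: inversions_def i_def dest: Max_ge[OF finite])
    then have sign: "gr_sign (S - {i}) {i} = (1::'a)"
      by (simp add: gr_sign_inversions)
    have "gr_mult n (gr_basis (S - {i})) (gr_basis {i}) = (gr_basis S :: nat set \<Rightarrow> 'a)"
    proof
      fix U
      have "(U \<subseteq> {1..n} \<and> {i} \<subseteq> U \<and> U - {i} = S - {i}) \<longleftrightarrow> U = S"
        using Suc.prems i by auto
      then show "gr_mult n (gr_basis (S - {i})) (gr_basis {i}) U = (gr_basis S U :: 'a)"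
        unfolding gr_mult_basis_right by (auto simp: gr_basis_def sign)
    qed
    then show ?thesis using A0.mult[OF IH A0.gen[OF i(2)]] by simp
  qed
qed

lemma A0_sum:
  "finite A \<Longrightarrow> (\<And>S. S \<in> A \<Longrightarrow> f S \<in> A0 n) \<Longrightarrow> (\<lambda>U. \<Sum>S\<in>A. f S U) \<in> A0 n"
proof (induction A rule: finite_induct)
  case empty
  then show ?case using A0.zero by (simp add: gr_zero_def)
next
  case (insert x F)
  then have "(\<lambda>U. \<Sum>S\<in>insert x F. f S U) = gr_add (f x) (\<lambda>U. \<Sum>S\<in>F. f S U)"
    by (simp add: gr_add_def)
  then show ?case using insert A0.add by auto
qed

lemma gr_in_A0:
  assumes "y \<in> gr n" "y {} = 0"
  shows "y \<in> A0 n"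
proof -
  let ?P = "Pow {1..n} - {{}}"
  have "(\<lambda>U. \<Sum>S\<in>?P. gr_smult (y S) (gr_basis S) U) \<in> A0 n"
    by (rule A0_sum) (auto intro!: A0.smult gr_basis_in_A0)
  moreover have "(\<lambda>U. \<Sum>S\<in>?P. gr_smult (y S) (gr_basis S) U) = y"
  proof
    fix U
    have "(\<Sum>S\<in>?P. gr_smult (y S) (gr_basis S) U) = (\<Sum>S\<in>?P. if U = S then y U else 0)"
      by (rule sum.cong) (auto simp: gr_smult_def gr_basis_def)
    also have "\<dots> = y U" using assms by (auto simp: gr_def)
    finally show "(\<Sum>S\<in>?P. gr_smult (y S) (gr_basis S) U) = y U" .
  qed
  ultimately show ?thesis by simp
qed

inductive_set sandwich_span ::
  "((nat set \<Rightarrow> 'a::field) \<Rightarrow> (nat set \<Rightarrow> 'a)) \<Rightarrow> ((nat set \<Rightarrow> 'a) \<Rightarrow> (nat set \<Rightarrow> 'a))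
    \<Rightarrow> nat \<Rightarrow> (nat set \<Rightarrow> 'a) \<Rightarrow> (nat set \<Rightarrow> 'a) set"
  for L R j y where
  gen: "p + q = j \<Longrightarrow> (L ^^ p) (R ((L ^^ q) y)) \<in> sandwich_span L R j y"
| add: "z \<in> sandwich_span L R j y \<Longrightarrow> w \<in> sandwich_span L R j y
    \<Longrightarrow> gr_add z w \<in> sandwich_span L R j y"
| smult: "z \<in> sandwich_span L R j y \<Longrightarrow> gr_smult c z \<in> sandwich_span L R j y"

lemma sandwich_span_apply_left:
  assumes "\<And>z w. L (gr_add z w) = gr_add (L z) (L w)"
    and "\<And>c z. L (gr_smult c z) = gr_smult c (L z)"
  shows "z \<in> sandwich_span L R j y \<Longrightarrow> L z \<in> sandwich_span L R (Suc j) y"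
proof (induction rule: sandwich_span.induct)
  case (gen p q)
  then show ?case using sandwich_span.gen[of "Suc p" q "Suc j" L R y] by simp
qed (auto simp: assms intro: sandwich_span.intros)

lemma sandwich_span_apply_right:
  "z \<in> sandwich_span L R j (L y) \<Longrightarrow> z \<in> sandwich_span L R (Suc j) y"
proof (induction rule: sandwich_span.induct)
  case (gen p q)
  then show ?case using sandwich_span.gen[of p "Suc q" "Suc j" L R y] by (simp add: funpow_swap1)
qed (auto intro: sandwich_span.intros)

lemma sandwich_span_eq_zero:
  assumes "\<And>p q. p + q = j \<Longrightarrow> (L ^^ p) (R ((L ^^ q) y)) = gr_zero"
  shows "z \<in> sandwich_span L R j y \<Longrightarrow> z = gr_zero"
  by (induction rule: sandwich_span.induct) (use assms in \<open>auto simp: gr_add_def gr_smult_def gr_zero_def\<close>)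

section \<open>Rota--Baxter operators of weight zero on \<open>Gr\<^sub>n\<close>\<close>

locale rota_baxter_gr =
  fixes n :: nat and R :: "(nat set \<Rightarrow> 'a::field) \<Rightarrow> (nat set \<Rightarrow> 'a)"
  assumes rota_baxter: "rota_baxter0 n R"
begin

lemma R_in_gr: "x \<in> gr n \<Longrightarrow> R x \<in> gr n"
  and R_add: "x \<in> gr n \<Longrightarrow> y \<in> gr n \<Longrightarrow> R (gr_add x y) = gr_add (R x) (R y)"
  and R_smult: "x \<in> gr n \<Longrightarrow> R (gr_smult c x) = gr_smult c (R x)"
  and R_rota_baxter: "x \<in> gr n \<Longrightarrow> y \<in> gr n \<Longrightarrow>
    gr_mult n (R x) (R y) = R (gr_add (gr_mult n (R x) y) (gr_mult n x (R y)))"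
  using rota_baxter by (simp_all add: rota_baxter0_def gr_linear_def)

lemma R_zero: "R gr_zero = gr_zero"
  using R_smult[OF gr_zero_in_gr, of 0] by (simp add: gr_smult_def gr_zero_def)

lemma R_pow_in_gr: "y \<in> gr n \<Longrightarrow> (R ^^ k) y \<in> gr n"
  by (induction k) (auto intro: R_in_gr)

text \<open>Descending induction on the filtration: if \<open>x \<in> (Gr\<^sub>n\<^sup>+)\<^sup>k\<close> has \<open>R x = \<gamma> + \<dots>\<close>, then
  \<open>R x \<cdot> x + x \<cdot> R x - 2\<gamma>x \<in> (Gr\<^sub>n\<^sup>+)\<^sup>k\<^sup>+\<^sup>1\<close>, and applying \<open>R\<close> to it gives \<open>(R x)\<^sup>2 - 2\<gamma> R x\<close>,
  whose constant term is \<open>-\<gamma>\<^sup>2\<close>.\<close>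

lemma R_constant_term_step:
  assumes IH: "\<forall>z\<in>gr n. gr_filt (Suc k) z \<longrightarrow> R z {} = 0"
    and x: "x \<in> gr n" "gr_filt k x"
  shows "R x {} = 0"
proof -
  define \<gamma> where "\<gamma> = R x {}"
  define w where "w = gr_add (gr_mult n (R x) x) (gr_mult n x (R x))"
  define z where "z = gr_add w (gr_smult (-2 * \<gamma>) x)"
  have w: "w \<in> gr n" and z: "z \<in> gr n" using x by (simp_all add: w_def z_def)
  have "gr_filt (Suc k) z" unfolding gr_filt_def
  proof (intro allI impI)
    fix U :: "nat set" assume "card U < Suc k"
    then show "z U = 0"
      using gr_mult_filt_right_low[OF x, of U "R x"] gr_mult_filt_left_low[OF x, of U "R x"]
      by (simp add: z_def w_def gr_add_def gr_smult_def \<gamma>_def algebra_simps)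
  qed
  with IH z have "R z {} = 0" by blast
  moreover have "R z = gr_add (gr_mult n (R x) (R x)) (gr_smult (-2 * \<gamma>) (R x))"
    using R_add[OF w] R_smult[OF x(1)] R_rota_baxter[OF x(1) x(1)] x by (simp add: z_def w_def)
  ultimately have "\<gamma> * \<gamma> + (-2 * \<gamma>) * \<gamma> = 0"
    by (simp add: gr_mult_def gr_add_def gr_smult_def \<gamma>_def)
  then show ?thesis by (simp add: \<gamma>_def)
qed

lemma R_constant_term:
  assumes "x \<in> gr n"
  shows "R x {} = 0"
proof -
  have "\<forall>z\<in>gr n. gr_filt k z \<longrightarrow> R z {} = 0" if "k \<le> Suc n" for k
    using that
  proof (induction rule: inc_induct)
    case base
    show ?case
    proof (intro ballI impI)
      fix z :: "nat set \<Rightarrow> 'a" assume "z \<in> gr n" "gr_filt (Suc n) z"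
      then have "z = gr_zero" by (rule gr_filt_top_eq_zero)
      then show "R z {} = 0" by (simp add: R_zero, simp add: gr_zero_def)
    qed
  next
    case (step k)
    then show ?case using R_constant_term_step by blast
  qed
  from this[of 0] assms show ?thesis by simp
qed

lemma R_filt_1: "x \<in> gr n \<Longrightarrow> gr_filt 1 (R x)"
  using R_constant_term R_in_gr unfolding gr_filt_def
  by (metis card_0_eq finite_subset_atLeastAtMost gr_outside less_one)

lemma R_top_commute:
  assumes "T \<subseteq> {1..n}"
  shows "R (gr_mult n (R (gr_basis {1..n})) (gr_basis T))
    = gr_mult n (R (gr_basis {1..n})) (R (gr_basis T))"
proof -
  have top: "gr_basis {1..n} \<in> gr n" and e: "gr_basis T \<in> gr n"
    using assms by (simp_all add: gr_basis_in_gr)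
  have "gr_filt n (gr_basis {1..n})" by (auto simp: gr_filt_def gr_basis_def)
  then have "gr_filt (Suc n) (gr_mult n (gr_basis {1..n}) (R (gr_basis T)))"
    using gr_filt_mult R_filt_1[OF e] by fastforce
  then have "gr_mult n (gr_basis {1..n}) (R (gr_basis T)) = gr_zero"
    by (rule gr_filt_top_eq_zero[OF gr_mult_in_gr])
  moreover have "gr_add y gr_zero = y" for y :: "nat set \<Rightarrow> 'a"
    by (simp add: gr_add_def gr_zero_def)
  ultimately show ?thesis using R_rota_baxter[OF top e] by simp
qed

text \<open>If \<open>c = R(e\<^sub>1 \<dots> e\<^sub>n) \<in> (Gr\<^sub>n\<^sup>+)\<^sup>k\<close> and \<open>|S| = k\<close>, then \<open>c e\<^sub>T = \<plusminus>c\<^sub>S e\<^sub>1 \<dots> e\<^sub>n\<close> for the complement \<open>T\<close> of \<open>S\<close>, so \<open>\<plusminus>c\<^sub>S c = c R(e\<^sub>T)\<close>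
  lies in \<open>(Gr\<^sub>n\<^sup>+)\<^sup>k\<^sup>+\<^sup>1\<close>; its \<open>e\<^sub>S\<close>-coefficient gives \<open>c\<^sub>S\<^sup>2 = 0\<close>.\<close>

lemma R_top_filt: "gr_filt k (R (gr_basis {1..n}))"
proof (induction k)
  case (Suc k)
  define c where "c = R (gr_basis {1..n})"
  have c: "c \<in> gr n" unfolding c_def by (simp add: R_in_gr gr_basis_in_gr)
  have top_coeff: "c S = 0" if S: "card S = k" "S \<subseteq> {1..n}" for S
  proof -
    define T where "T = {1..n} - S"
    have top: "gr_basis {1..n} \<in> gr n" and e: "gr_basis T \<in> gr n"
      by (simp_all add: gr_basis_in_gr T_def)
    have "gr_smult (gr_sign S T * c S) c = R (gr_mult n c (gr_basis T))"
      using gr_mult_filt_basis_compl[OF Suc.IH[folded c_def] S(2,1)] R_smult[OF top]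
      by (simp add: T_def c_def)
    also have "\<dots> = gr_mult n c (R (gr_basis T))"
      using R_top_commute[of T] by (simp add: T_def c_def)
    finally have "gr_smult (gr_sign S T * c S) c S = gr_mult n c (R (gr_basis T)) S"
      by simp
    moreover have "gr_filt (Suc k) (gr_mult n c (R (gr_basis T)))"
      using gr_filt_mult[OF Suc.IH[folded c_def] R_filt_1[OF e]] by simp
    ultimately have "gr_sign S T * c S * c S = 0"
      using S(1) by (simp add: gr_filt_def gr_smult_def)
    then show ?thesis using gr_sign_nonzero[of S T, where 'a = 'a] by simp
  qed
  show ?case unfolding gr_filt_def
  proof (intro allI impI)
    fix S :: "nat set" assume "card S < Suc k"
    then consider "card S < k" | "card S = k" by linarith
    then show "R (gr_basis {1..n}) S = 0"
    proof cases
      case 1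
      then show ?thesis using Suc.IH by (simp add: gr_filt_def)
    next
      case 2
      then show ?thesis
        using top_coeff c by (cases "S \<subseteq> {1..n}") (auto simp: c_def gr_outside)
    qed
  qed
qed simp

lemma R_top_eq_zero: "R (gr_basis {1..n}) = gr_zero"
  by (rule gr_filt_top_eq_zero[OF R_in_gr R_top_filt]) (simp add: gr_basis_in_gr)

abbreviation lmult_R1 :: "(nat set \<Rightarrow> 'a) \<Rightarrow> (nat set \<Rightarrow> 'a)" where
  "lmult_R1 \<equiv> gr_mult n (R gr_one)"

lemma lmult_R1_funpow:
  "z \<in> gr n \<Longrightarrow> (lmult_R1 ^^ k) z = gr_mult n (gr_pow n (R gr_one) k) z"
proof (induction k arbitrary: z)
  case 0
  then show ?case by (simp add: gr_mult_one_left)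
next
  case (Suc k)
  have "(lmult_R1 ^^ Suc k) z = (lmult_R1 ^^ k) (lmult_R1 z)" by (simp add: funpow_swap1)
  also have "\<dots> = gr_mult n (gr_pow n (R gr_one) (Suc k)) z"
    using Suc.IH by (simp add: gr_mult_assoc)
  finally show ?case .
qed

lemma lmult_R1_R:
  assumes "y \<in> gr n"
  shows "lmult_R1 (R y) = gr_add (R (lmult_R1 y)) (R (R y))"
  using R_rota_baxter[OF gr_one_in_gr assms] R_add[OF gr_mult_in_gr R_in_gr[OF assms]]
    gr_mult_one_left[OF R_in_gr[OF assms]] by simp

lemma lmult_R1_R_pow:
  "y \<in> gr n \<Longrightarrow> lmult_R1 ((R ^^ k) y)
    = gr_add ((R ^^ k) (lmult_R1 y)) (gr_smult (of_nat k) ((R ^^ Suc k) y))"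
proof (induction k)
  case 0
  then show ?case by (simp add: gr_add_def gr_smult_def)
next
  case (Suc k)
  have "lmult_R1 ((R ^^ Suc k) y) = gr_add (R (lmult_R1 ((R ^^ k) y))) (R (R ((R ^^ k) y)))"
    using lmult_R1_R[OF R_pow_in_gr[OF Suc.prems]] by simp
  also have "\<dots> = gr_add (gr_add ((R ^^ Suc k) (lmult_R1 y))
      (gr_smult (of_nat k) ((R ^^ Suc (Suc k)) y))) ((R ^^ Suc (Suc k)) y)"
    using Suc R_add R_smult R_pow_in_gr[of "lmult_R1 y" k] R_pow_in_gr[OF Suc.prems, of "Suc k"]
    by simp
  also have "\<dots> = gr_add ((R ^^ Suc k) (lmult_R1 y)) (gr_smult (of_nat (Suc k)) ((R ^^ Suc (Suc k)) y))"
    by (simp add: fun_eq_iff gr_add_def gr_smult_def algebra_simps)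
  finally show ?case .
qed

lemma fact_R_pow_in_sandwich_span:
  "y \<in> gr n \<Longrightarrow> gr_smult (of_nat (fact j)) ((R ^^ Suc j) y) \<in> sandwich_span lmult_R1 R j y"
proof (induction j arbitrary: y)
  case 0
  then show ?case using sandwich_span.gen[of 0 0 0 lmult_R1 R y] by (simp add: gr_smult_def)
next
  case (Suc j)
  have "gr_smult (of_nat (fact (Suc j))) ((R ^^ Suc (Suc j)) y) =
     gr_add (lmult_R1 (gr_smult (of_nat (fact j)) ((R ^^ Suc j) y)))
       (gr_smult (-1) (gr_smult (of_nat (fact j)) ((R ^^ Suc j) (lmult_R1 y))))"
    unfolding gr_mult_smult_right lmult_R1_R_pow[OF Suc.prems]
    by (simp add: fun_eq_iff gr_add_def gr_smult_def algebra_simps)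
  moreover have "lmult_R1 (gr_smult (of_nat (fact j)) ((R ^^ Suc j) y)) \<in> sandwich_span lmult_R1 R (Suc j) y"
    by (rule sandwich_span_apply_left[OF gr_mult_add_right gr_mult_smult_right Suc.IH[OF Suc.prems]])
  moreover have "gr_smult (-1) (gr_smult (of_nat (fact j)) ((R ^^ Suc j) (lmult_R1 y)))
      \<in> sandwich_span lmult_R1 R (Suc j) y"
    by (rule sandwich_span_apply_right, rule sandwich_span.smult, rule Suc.IH) simp
  ultimately show ?case by (simp add: sandwich_span.add)
qed

end

locale rota_baxter_gr_char_0 = rota_baxter_gr n R
  for n and R :: "(nat set \<Rightarrow> 'a::field_char_0) \<Rightarrow> (nat set \<Rightarrow> 'a)"
begin

text \<open>Split \<open>R(1) = u + v\<close> into odd and even parts: \<open>u\<^sup>2 = 0\<close>, \<open>v\<close> is central and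
  \<open>v \<in> (Gr\<^sub>n\<^sup>+)\<^sup>2\<close>, so \<open>R(1)\<^sup>m\<^sup>+\<^sup>1 = v\<^sup>m\<^sup>+\<^sup>1 + (m+1) v\<^sup>m u\<close> lies in \<open>(Gr\<^sub>n\<^sup>+)\<^sup>2\<^sup>m\<^sup>+\<^sup>1\<close>.\<close>

lemma R_one_pow_eq_zero: "gr_pow n (R gr_one) ((n + 1) div 2 + 1) = gr_zero"
proof -
  define m where "m = (n + 1) div 2"
  define u where "u = (\<lambda>T. if odd (card T) then R gr_one T else 0)"
  define v where "v = (\<lambda>T. if even (card T) then R gr_one T else 0)"
  have R1: "R gr_one \<in> gr n" "gr_filt 1 (R gr_one)"
    using R_in_gr R_filt_1 gr_one_in_gr by blast+
  have u: "u \<in> gr n" "gr_filt 1 u" and v: "v \<in> gr n" "gr_filt 2 v"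
    using R1 by (auto simp: gr_def gr_filt_def u_def v_def less_2_cases_iff)
  have "R gr_one = gr_add u v" by (auto simp: fun_eq_iff gr_add_def u_def v_def)
  moreover have "gr_mult n u u = gr_zero" by (rule gr_mult_odd_self) (simp add: u_def)
  moreover have "gr_mult n v y = gr_mult n y v" for y
    by (rule gr_mult_even_commute) (simp add: v_def)
  ultimately have pow: "gr_pow n (R gr_one) (Suc m)
      = gr_add (gr_pow n v (Suc m)) (gr_smult (of_nat (Suc m)) (gr_mult n (gr_pow n v m) u))"
    using gr_pow_add_square_zero[OF u(1) v(1)] by simp
  have "gr_filt (2 * Suc m) (gr_pow n v (Suc m))" by (rule gr_filt_pow[OF v(2)])
  then have "gr_filt (Suc n) (gr_pow n v (Suc m))" by (rule gr_filt_mono) (simp add: m_def)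
  then have "gr_pow n v (Suc m) = gr_zero" by (rule gr_filt_top_eq_zero[OF gr_pow_in_gr])
  moreover have "gr_filt (2 * m + 1) (gr_mult n (gr_pow n v m) u)"
    by (rule gr_filt_mult[OF gr_filt_pow[OF v(2)] u(2)])
  then have "gr_filt (Suc n) (gr_mult n (gr_pow n v m) u)" by (rule gr_filt_mono) (simp add: m_def)
  then have "gr_mult n (gr_pow n v m) u = gr_zero" by (rule gr_filt_top_eq_zero[OF gr_mult_in_gr])
  ultimately show ?thesis
    using pow by (simp add: m_def gr_add_def gr_smult_def gr_zero_def)
qed

lemma R_pow_eq_zero:
  assumes y: "y \<in> gr n"
  shows "(R ^^ (2 * ((n + 1) div 2) + 2)) y = gr_zero"
proof -
  define m where "m = (n + 1) div 2 + 1"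
  have lmult_R1_pow: "(lmult_R1 ^^ p) z = gr_zero" if "z \<in> gr n" "m \<le> p" for z p
  proof -
    have "(lmult_R1 ^^ m) z = gr_zero"
      unfolding lmult_R1_funpow[OF that(1)] m_def R_one_pow_eq_zero gr_mult_zero_left ..
    then have "(lmult_R1 ^^ (p - m)) ((lmult_R1 ^^ m) z) = gr_zero"
      by (simp add: lmult_R1_funpow gr_mult_zero_right)
    then show ?thesis
      using that(2) by (metis funpow_add le_add_diff_inverse2 o_apply)
  qed
  have "(lmult_R1 ^^ p) (R ((lmult_R1 ^^ q) y)) = gr_zero" if "p + q = 2 * m - 1" for p q
  proof (cases "m \<le> q")
    case True
    then show ?thesis
      using lmult_R1_pow[OF y] by (simp add: R_zero lmult_R1_funpow gr_mult_zero_right)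
  next
    case False
    with that have "m \<le> p" by linarith
    moreover have "R ((lmult_R1 ^^ q) y) \<in> gr n" by (simp add: R_in_gr lmult_R1_funpow y)
    ultimately show ?thesis using lmult_R1_pow by blast
  qed
  then have "gr_smult (of_nat (fact (2 * m - 1))) ((R ^^ Suc (2 * m - 1)) y) = gr_zero"
    using sandwich_span_eq_zero fact_R_pow_in_sandwich_span[OF y] by blast
  then have "(R ^^ Suc (2 * m - 1)) y = gr_zero"
    unfolding gr_smult_eq_zero_iff by simp
  moreover have "Suc (2 * m - 1) = 2 * ((n + 1) div 2) + 2" by (simp add: m_def)
  ultimately show ?thesis by metis
qed

end

theorem lemma14:
  fixes R :: "(nat set \<Rightarrow> 'a::field_char_0) \<Rightarrow> (nat set \<Rightarrow> 'a)" and n :: nat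
  assumes "rota_baxter0 n R"
  shows "(\<forall>x\<in>gr n. R x \<in> A0 n)
    \<and> R (gr_basis {1..n}) = gr_zero
    \<and> gr_pow n (R gr_one) ((n + 1) div 2 + 1) = gr_zero
    \<and> rb_index TYPE('a) n \<le> 2 * ((n + 1) div 2) + 2"
proof -
  interpret rota_baxter_gr_char_0 n R
    using assms by unfold_locales
  have "rb_index TYPE('a) n \<le> 2 * ((n + 1) div 2) + 2"
    unfolding rb_index_def
    by (rule Least_le) (blast intro: rota_baxter_gr_char_0.R_pow_eq_zero rota_baxter_gr_char_0.intro
        rota_baxter_gr.intro)
  then show ?thesis
    using gr_in_A0 R_in_gr R_constant_term R_top_eq_zero R_one_pow_eq_zero by blast
qed

end
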